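(* Let $G=(I\cup C,E)$ be a split graph whose clique vertices are labelled $1,\dots,k$ so that conditions (i)–(iii) below hold, and let $w$ be the word constructed below. If $a,b\in I$ are distinct, then $a$ and $b$ do not alternate in $w$.
   Context: Words: a word over a finite set $X$ is a finite sequence of elements of $X$; for a word $u$ and $S\subseteq X$, $u|_S$ is the subsequence of $u$ consisting of all occurrences of letters of $S$; $u^R$ is the reversal of $u$. Two letters $x,y$ alternate in $u$ if $u|_{\{x,y\}}$ is of the form $xyxy\cdots$ or $yxyx\cdots$ (of even or odd length); otherwise they do not alternate. For integers $a\le b$, $[a,b]=\{a,a+1,\dots,b\}$. Setting: $G=(I\cup C,E)$ is a split graph: $C$ induces a clique, $I$ induces an independent set, and $C$ is inclusion-wise maximal, i.e. no vertex of $I$ is adjacent to all vertices of $C$. The vertices of $C$ are labelled by $1,\dots,k$ where $k=|C|$, and for all $a,b\in I$: (i) either $N(a)=[1,m]\cup[n,k]$ for some $m<n$, or $N(a)=[l,r]$ for some $l\le r$; (ii) if $N(a)=[1,m]\cup[n,k]$ ($m<n$) and $N(b)=[l,r]$ ($l\le r$), then $l>m$ or $r<n$; (iii) if $N(a)=[1,m]\cup[n,k]$ and $N(b)=[1,m']\cup[n',k]$ ($m<n$, $m'<n'$), then $m'<n$ and $m<n'$. Let $B$ be the set of $a\in I$ whose neighbourhood is an integer interval $[l_a,r_a]$, and $A=I\setminus B$; for $a\in A$ write $N(a)=[1,m_a]\cup[n_a,k]$ with $m_a<n_a$. Construction of $w$: start with $p_1=p_2=p_3=12\cdots k$. Process the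 vertices of $I$ one at a time in an arbitrary fixed order; "replace $y$ in $p$ by $yx$" (resp. $xy$) means replacing the unique occurrence of the letter $y$ in $p$ by the two letters $yx$ (resp. $xy$). For $a\in A$: replace $m_a$ in $p_1$ by $m_a a$, and replace $n_a$ in $p_2$ by $a n_a$. For $a\in B$: replace $l_a$ in $p_1$ by $a l_a$, and replace $r_a$ in $p_2$ by $r_a a$. After all vertices of $I$ are processed, let $d=\max(\{1\}\cup\{m_a: a\in A\})$ and replace the letter $d$ in $p_3$ by the word $d\,(p_1|_A)^R$. Finally set $w=p_1\,(p_1|_B)^R\,p_2\,p_3$ (a $3$-uniform word over $V$). *)

theory Defs
  imports Main
begin

text \<open>Letters of the word: clique vertex j is Inl j (1 <= j <= k),
  independent vertex a is Inr a.\<close>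

definition subword :: "'b set \<Rightarrow> 'b list \<Rightarrow> 'b list" where
  "subword S u = filter (\<lambda>z. z \<in> S) u"

definition alternate :: "'b list \<Rightarrow> 'b \<Rightarrow> 'b \<Rightarrow> bool" where
  "alternate u x y \<longleftrightarrow>
     (\<exists>n. subword {x, y} u = map (\<lambda>i. if even i then x else y) [0..<n]
        \<or> subword {x, y} u = map (\<lambda>i. if even i then y else x) [0..<n])"

definition interval_nb :: "nat \<Rightarrow> nat set \<Rightarrow> bool" where
  "interval_nb k S \<longleftrightarrow> (\<exists>l r. 1 \<le> l \<and> l \<le> r \<and> r \<le> k \<and> S = {l..r})"

definition cyclic_nb :: "nat \<Rightarrow> nat set \<Rightarrow> bool" where
  "cyclic_nb k S \<longleftrightarrow> (\<exists>m n. 1 \<le> m \<and> m < n \<and> n \<le> k \<and> S = {1..m} \<union> {n..k})"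

definition nb_l :: "nat set \<Rightarrow> nat" where
  "nb_l S = (THE l. \<exists>r. l \<le> r \<and> S = {l..r})"

definition nb_r :: "nat set \<Rightarrow> nat" where
  "nb_r S = (THE r. \<exists>l. l \<le> r \<and> S = {l..r})"

definition nb_m :: "nat \<Rightarrow> nat set \<Rightarrow> nat" where
  "nb_m k S = (THE m. \<exists>n. 1 \<le> m \<and> m < n \<and> n \<le> k \<and> S = {1..m} \<union> {n..k})"

definition nb_n :: "nat \<Rightarrow> nat set \<Rightarrow> nat" where
  "nb_n k S = (THE n. \<exists>m. 1 \<le> m \<and> m < n \<and> n \<le> k \<and> S = {1..m} \<union> {n..k})"

definition repl_after :: "'b \<Rightarrow> 'b \<Rightarrow> 'b list \<Rightarrow> 'b list" where
  "repl_after y x p = concat (map (\<lambda>z. if z = y then [z, x] else [z]) p)"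

definition repl_before :: "'b \<Rightarrow> 'b \<Rightarrow> 'b list \<Rightarrow> 'b list" where
  "repl_before y x p = concat (map (\<lambda>z. if z = y then [x, z] else [z]) p)"

definition repl_word :: "'b \<Rightarrow> 'b list \<Rightarrow> 'b list \<Rightarrow> 'b list" where
  "repl_word y v p = concat (map (\<lambda>z. if z = y then v else [z]) p)"

definition step :: "nat \<Rightarrow> ('a \<Rightarrow> nat set) \<Rightarrow> 'a
     \<Rightarrow> (nat + 'a) list \<times> (nat + 'a) list \<Rightarrow> (nat + 'a) list \<times> (nat + 'a) list" where
  "step k N a pp = (case pp of (p1, p2) \<Rightarrow>
     if interval_nb k (N a)
     then (repl_before (Inl (nb_l (N a))) (Inr a) p1, repl_after (Inl (nb_r (N a))) (Inr a) p2)
     else (repl_after (Inl (nb_m k (N a))) (Inr a) p1, repl_before (Inl (nb_n k (N a))) (Inr a) p2))"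

text \<open>The word w; the list Is is the fixed processing order of the vertices of I.\<close>
definition construct_w :: "nat \<Rightarrow> ('a \<Rightarrow> nat set) \<Rightarrow> 'a list \<Rightarrow> (nat + 'a) list" where
  "construct_w k N Is =
    (let p0 = map Inl [1..<Suc k];
         pp = fold (step k N) Is (p0, p0);
         p1 = fst pp; p2 = snd pp;
         Aset = {a \<in> set Is. \<not> interval_nb k (N a)};
         Bset = {a \<in> set Is. interval_nb k (N a)};
         d = Max ({1} \<union> (\<lambda>a. nb_m k (N a)) ` Aset);
         p3 = repl_word (Inl d) (Inl d # rev (subword (Inr ` Aset) p1)) p0
     in p1 @ rev (subword (Inr ` Bset) p1) @ p2 @ p3)"

end

theory Submission
  imports Defs
begin

(* Restricted to {a, b}, the word w reads u1 (u1|B)^R u2 (u1|A)^R, where u1 and u2 are the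
   restrictions of p1 and p2, each equal to ab or ba. If a, b are both in B, this contains
   u1 u1^R; if both are in A, it is u1 u2 u1^R; either way some letter occurs twice in a row.
   If a is in B and b in A, it is u1 a u2 b, and condition (ii), l_a > m_b or r_a < n_b, says
   that b precedes a in p1 or a precedes b in p2, which again doubles a letter. The order of
   the letters in p1 and p2 is controlled by an invariant: they stay sorted by the positions at
   which the construction inserts them. *)

lemma repl_before_Nil [simp]: "repl_before y x [] = []"
  by (simp add: repl_before_def)

lemma repl_before_Cons [simp]:
  "repl_before y x (z # p) = (if z = y then [x, z] else [z]) @ repl_before y x p"
  by (simp add: repl_before_def)

lemma repl_after_Nil [simp]: "repl_after y x [] = []"
  by (simp add: repl_after_def)

lemma repl_after_Cons [simp]:
  "repl_after y x (z # p) = (if z = y then [z, x] else [z]) @ repl_after y x p"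
  by (simp add: repl_after_def)

lemma repl_before_split:
  "y \<notin> set xs \<Longrightarrow> y \<notin> set ys \<Longrightarrow> repl_before y x (xs @ y # ys) = xs @ x # y # ys"
proof (induction xs)
  case Nil
  then show ?case by (induction ys) auto
qed auto

lemma repl_after_split:
  "y \<notin> set xs \<Longrightarrow> y \<notin> set ys \<Longrightarrow> repl_after y x (xs @ y # ys) = xs @ y # x # ys"
proof (induction xs)
  case Nil
  then show ?case by (induction ys) auto
qed auto

definition sorted_listing :: "('b \<Rightarrow> nat) \<Rightarrow> 'b set \<Rightarrow> 'b list \<Rightarrow> bool" where
  "sorted_listing key V p \<longleftrightarrow> distinct p \<and> set p = V \<and> sorted (map key p)"

lemma sorted_listing_repl_before:
  assumes p: "sorted_listing key V p" and "y \<in> V" "x \<notin> V"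
    and key_x: "Suc (key x) = key y" and key_y: "\<And>z. key z = key y \<Longrightarrow> z = y"
  shows "sorted_listing key (insert x V) (repl_before y x p)"
proof -
  obtain xs ys where split: "p = xs @ y # ys"
    using p \<open>y \<in> V\<close> unfolding sorted_listing_def by (metis split_list)
  have "key z \<le> key x" if "z \<in> set xs" for z
  proof -
    have "key z \<le> key y" "z \<noteq> y"
      using p that unfolding sorted_listing_def split by (auto simp: sorted_append)
    then show ?thesis
      using key_x key_y[of z] by fastforce
  qed
  then show ?thesis
    using p \<open>x \<notin> V\<close> key_x unfolding sorted_listing_def split
    by (auto simp: repl_before_split sorted_append)
qed

lemma sorted_listing_repl_after:
  assumes p: "sorted_listing key V p" and "y \<in> V" "x \<notin> V"
    and key_x: "key x = Suc (key y)" and key_y: "\<And>z. key z = key y \<Longrightarrow> z = y"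
  shows "sorted_listing key (insert x V) (repl_after y x p)"
proof -
  obtain xs ys where split: "p = xs @ y # ys"
    using p \<open>y \<in> V\<close> unfolding sorted_listing_def by (metis split_list)
  have "key x \<le> key z" if "z \<in> set ys" for z
  proof -
    have "key y \<le> key z" "z \<noteq> y"
      using p that unfolding sorted_listing_def split by (auto simp: sorted_append)
    then show ?thesis
      using key_x key_y[of z] by fastforce
  qed
  then show ?thesis
    using p \<open>x \<notin> V\<close> key_x unfolding sorted_listing_def split
    by (auto simp: repl_after_split sorted_append)
qed

lemma filter_repl_word:
  "distinct p \<Longrightarrow> \<forall>z\<in>set p. \<not> P z \<Longrightarrow>
    filter P (repl_word y v p) = (if y \<in> set p then filter P v else [])"
  by (induction p) (auto simp: repl_word_def)

lemma distinct_doubleton_list: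
  assumes "distinct xs" "set xs = {u, v}" "u \<noteq> v"
  shows "xs = [u, v] \<or> xs = [v, u]"
proof -
  have "length xs = 2"
    using distinct_card[OF assms(1)] assms(2,3) by simp
  then obtain s t where "xs = [s, t]"
    by (metis length_0_conv length_Suc_conv numeral_2_eq_2)
  then show ?thesis
    using assms(2) by (auto simp: doubleton_eq_iff)
qed

lemma sorted_listing_subword_pair:
  assumes "sorted_listing key V p" "u \<in> V" "v \<in> V" "u \<noteq> v"
  shows "subword {u, v} p = [u, v] \<or> subword {u, v} p = [v, u]"
    and "sorted (map key (subword {u, v} p))"
  using assms distinct_doubleton_list[of "subword {u, v} p" u v]
  by (auto simp: sorted_listing_def subword_def sorted_filter)

fun adjacent_repeat :: "'b list \<Rightarrow> bool" where
  "adjacent_repeat (x # y # zs) \<longleftrightarrow> x = y \<or> adjacent_repeat (y # zs)"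
| "adjacent_repeat _ \<longleftrightarrow> False"

lemma alternating_word_Suc:
  "map (\<lambda>i. if even i then x else y) [0..<Suc n] = x # map (\<lambda>i. if even i then y else x) [0..<n]"
  by (induction n) auto

lemma alternating_word_no_adjacent_repeat:
  "x \<noteq> y \<Longrightarrow> \<not> adjacent_repeat (map (\<lambda>i. if even i then x else y) [0..<n])"
proof (induction n arbitrary: x y)
  case (Suc n)
  then show ?case
    using Suc.IH[of y x] by (cases n) (simp_all add: alternating_word_Suc del: upt_Suc)
qed simp

lemma adjacent_repeat_not_alternate:
  "x \<noteq> y \<Longrightarrow> adjacent_repeat (subword {x, y} u) \<Longrightarrow> \<not> alternate u x y"
  unfolding alternate_def
  using alternating_word_no_adjacent_repeat[of x y] alternating_word_no_adjacent_repeat[of y x]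
  by metis

lemma interval_nb_bounds:
  assumes "interval_nb k S"
  shows "1 \<le> nb_l S \<and> nb_l S \<le> nb_r S \<and> nb_r S \<le> k \<and> S = {nb_l S..nb_r S}"
proof -
  obtain l r where lr: "1 \<le> l" "l \<le> r" "r \<le> k" "S = {l..r}"
    using assms unfolding interval_nb_def by blast
  have "nb_l S = l"
    unfolding nb_l_def by (rule the_equality) (use lr in auto)
  moreover have "nb_r S = r"
    unfolding nb_r_def by (rule the_equality) (use lr in auto)
  ultimately show ?thesis
    using lr by simp
qed

lemma cyclic_nb_unique:
  fixes m n m' n' k :: nat
  assumes "Suc m < n" "m' < n'" "n \<le> k" "n' \<le> k" "1 \<le> m'"
    and "{1..m} \<union> {n..k} = {1..m'} \<union> {n'..k}"
  shows "m' = m \<and> n' = n"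
proof -
  have mem: "1 \<le> i \<and> i \<le> m \<or> n \<le> i \<and> i \<le> k \<longleftrightarrow> 1 \<le> i \<and> i \<le> m' \<or> n' \<le> i \<and> i \<le> k" for i
    using assms(6) by (simp add: set_eq_iff)
  have "m' = m"
    using mem[of "Suc m"] mem[of m] mem[of m'] assms(1-5) by auto
  moreover have "n' = n"
    using mem[of n] mem[of n'] assms(1-5) \<open>m' = m\<close> by auto
  ultimately show ?thesis ..
qed

lemma cyclic_nb_bounds:
  assumes "cyclic_nb k S" "S \<noteq> {1..k}"
  shows "1 \<le> nb_m k S \<and> nb_m k S < nb_n k S \<and> nb_n k S \<le> k \<and> S = {1..nb_m k S} \<union> {nb_n k S..k}"
proof -
  obtain m n where mn: "1 \<le> m" "m < n" "n \<le> k" "S = {1..m} \<union> {n..k}"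
    using assms(1) unfolding cyclic_nb_def by blast
  have "n \<noteq> Suc m"
    using mn assms(2) by auto
  then have gap: "Suc m < n"
    using mn by simp
  have "nb_m k S = m"
    unfolding nb_m_def by (rule the_equality) (use mn gap cyclic_nb_unique in blast)+
  moreover have "nb_n k S = n"
    unfolding nb_n_def by (rule the_equality) (use mn gap cyclic_nb_unique in blast)+
  ultimately show ?thesis
    using mn by simp
qed

definition proper_nb :: "nat \<Rightarrow> nat set \<Rightarrow> bool" where
  "proper_nb k S \<longleftrightarrow> interval_nb k S \<or> cyclic_nb k S \<and> S \<noteq> {1..k}"

(* Intended positions in p1 and p2: clique vertex j sits at 4j+2, and a vertex of I is
   inserted right before (4j+1) or right after (4j+3) its anchor j. *)
definition p1_key :: "nat \<Rightarrow> ('a \<Rightarrow> nat set) \<Rightarrow> nat + 'a \<Rightarrow> nat" where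
  "p1_key k N z = (case z of
      Inl j \<Rightarrow> 4 * j + 2
    | Inr x \<Rightarrow> if interval_nb k (N x) then 4 * nb_l (N x) + 1 else 4 * nb_m k (N x) + 3)"

definition p2_key :: "nat \<Rightarrow> ('a \<Rightarrow> nat set) \<Rightarrow> nat + 'a \<Rightarrow> nat" where
  "p2_key k N z = (case z of
      Inl j \<Rightarrow> 4 * j + 2
    | Inr x \<Rightarrow> if interval_nb k (N x) then 4 * nb_r (N x) + 3 else 4 * nb_n k (N x) + 1)"

lemma p1_key_eq_Inl: "p1_key k N z = p1_key k N (Inl j) \<Longrightarrow> z = Inl j"
  by (auto simp: p1_key_def split: sum.splits if_splits) presburger+

lemma p2_key_eq_Inl: "p2_key k N z = p2_key k N (Inl j) \<Longrightarrow> z = Inl j"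
  by (auto simp: p2_key_def split: sum.splits if_splits) presburger+

definition sorted_listings ::
    "nat \<Rightarrow> ('a \<Rightarrow> nat set) \<Rightarrow> 'a set \<Rightarrow> (nat + 'a) list \<times> (nat + 'a) list \<Rightarrow> bool" where
  "sorted_listings k N D ps \<longleftrightarrow>
     sorted_listing (p1_key k N) (Inl ` {1..k} \<union> Inr ` D) (fst ps) \<and>
     sorted_listing (p2_key k N) (Inl ` {1..k} \<union> Inr ` D) (snd ps)"

lemma sorted_listings_step:
  assumes ps: "sorted_listings k N D ps" and "x \<notin> D" "proper_nb k (N x)"
  shows "sorted_listings k N (insert x D) (step k N x ps)"
proof -
  obtain p1 p2 where ps_def: "ps = (p1, p2)"
    by fastforce
  let ?V = "Inl ` {1..k} \<union> Inr ` D"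
  have p1: "sorted_listing (p1_key k N) ?V p1" and p2: "sorted_listing (p2_key k N) ?V p2"
    using ps by (simp_all add: sorted_listings_def ps_def)
  have new: "Inr x \<notin> ?V" and V': "insert (Inr x) ?V = Inl ` {1..k} \<union> Inr ` insert x D"
    using \<open>x \<notin> D\<close> by auto
  show ?thesis
  proof (cases "interval_nb k (N x)")
    case True
    then have l: "Inl (nb_l (N x)) \<in> ?V" and r: "Inl (nb_r (N x)) \<in> ?V"
      using interval_nb_bounds[OF True] by auto
    have "sorted_listing (p1_key k N) (insert (Inr x) ?V) (repl_before (Inl (nb_l (N x))) (Inr x) p1)"
      by (rule sorted_listing_repl_before[OF p1 l new _ p1_key_eq_Inl]) (simp add: p1_key_def True)
    moreover have "sorted_listing (p2_key k N) (insert (Inr x) ?V) (repl_after (Inl (nb_r (N x))) (Inr x) p2)"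
      by (rule sorted_listing_repl_after[OF p2 r new _ p2_key_eq_Inl]) (simp add: p2_key_def True)
    ultimately show ?thesis
      by (simp add: sorted_listings_def ps_def step_def True V')
  next
    case False
    then have cyc: "cyclic_nb k (N x)" "N x \<noteq> {1..k}"
      using \<open>proper_nb k (N x)\<close> by (auto simp: proper_nb_def)
    have m: "Inl (nb_m k (N x)) \<in> ?V" and n: "Inl (nb_n k (N x)) \<in> ?V"
      using cyclic_nb_bounds[OF cyc] by auto
    have "sorted_listing (p1_key k N) (insert (Inr x) ?V) (repl_after (Inl (nb_m k (N x))) (Inr x) p1)"
      by (rule sorted_listing_repl_after[OF p1 m new _ p1_key_eq_Inl]) (simp add: p1_key_def False)
    moreover have "sorted_listing (p2_key k N) (insert (Inr x) ?V) (repl_before (Inl (nb_n k (N x))) (Inr x) p2)"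
      by (rule sorted_listing_repl_before[OF p2 n new _ p2_key_eq_Inl]) (simp add: p2_key_def False)
    ultimately show ?thesis
      by (simp add: sorted_listings_def ps_def step_def False V')
  qed
qed

lemma sorted_listings_fold_step:
  assumes "distinct Is" "\<forall>x\<in>set Is. proper_nb k (N x)"
  shows "sorted_listings k N (set Is) (fold (step k N) Is (map Inl [1..<Suc k], map Inl [1..<Suc k]))"
  using assms
proof (induction Is rule: rev_induct)
  case Nil
  show ?case
    by (auto simp: sorted_listings_def sorted_listing_def p1_key_def p2_key_def
        sorted_map distinct_map simp del: upt_Suc)
next
  case (snoc x xs)
  then show ?case
    using sorted_listings_step[of k N "set xs" _ x] by simp
qed

lemma subword_construct_w:
  assumes "S \<inter> range Inl = {}" "1 \<le> k" "\<forall>x\<in>set Is. proper_nb k (N x)"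
  defines "ps \<equiv> fold (step k N) Is (map Inl [1..<Suc k], map Inl [1..<Suc k])"
  shows "subword S (construct_w k N Is) =
    subword S (fst ps) @ rev (subword (Inr ` {x \<in> set Is. interval_nb k (N x)}) (subword S (fst ps))) @
    subword S (snd ps) @ rev (subword (Inr ` {x \<in> set Is. \<not> interval_nb k (N x)}) (subword S (fst ps)))"
proof -
  define d where "d = Max ({1} \<union> (\<lambda>x. nb_m k (N x)) ` {x \<in> set Is. \<not> interval_nb k (N x)})"
  have "nb_m k (N x) \<le> k" if "x \<in> set Is" "\<not> interval_nb k (N x)" for x
  proof -
    have "cyclic_nb k (N x)" "N x \<noteq> {1..k}"
      using that assms(3) unfolding proper_nb_def by blast+
    then show ?thesis
      using cyclic_nb_bounds[of k "N x"] by linarith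
  qed
  then have "d \<in> {1..k}"
    using \<open>1 \<le> k\<close> unfolding d_def by auto
  then have "subword S (repl_word (Inl d) v (map Inl [1..<Suc k])) = subword S v" for v
    unfolding subword_def using assms(1)
    by (subst filter_repl_word) (auto simp: distinct_map simp del: upt_Suc)
  moreover have "Inl d \<notin> S"
    using assms(1) by auto
  ultimately show ?thesis
    unfolding construct_w_def Let_def d_def[symmetric] ps_def[symmetric]
    by (simp add: subword_def rev_filter[symmetric] conj_comms del: upt_Suc)
qed

lemma restriction_construct_w:
  assumes "distinct Is" "\<forall>x\<in>set Is. proper_nb k (N x)" "a \<in> set Is" "b \<in> set Is" "a \<noteq> b"
  obtains u1 u2 where
    "u1 = [Inr a, Inr b] \<or> u1 = [Inr b, Inr a]" "sorted (map (p1_key k N) u1)"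
    "u2 = [Inr a, Inr b] \<or> u2 = [Inr b, Inr a]" "sorted (map (p2_key k N) u2)"
    "subword {Inr a, Inr b} (construct_w k N Is) =
      u1 @ rev (subword (Inr ` {x \<in> set Is. interval_nb k (N x)}) u1) @
      u2 @ rev (subword (Inr ` {x \<in> set Is. \<not> interval_nb k (N x)}) u1)"
proof -
  have "1 \<le> k"
    using assms(2,3) by (auto simp: proper_nb_def interval_nb_def cyclic_nb_def)
  define ps where "ps = fold (step k N) Is (map Inl [1..<Suc k], map Inl [1..<Suc k])"
  let ?V = "Inl ` {1..k} \<union> Inr ` set Is"
  have "sorted_listings k N (set Is) ps"
    unfolding ps_def using assms(1,2) by (rule sorted_listings_fold_step)
  then have p1: "sorted_listing (p1_key k N) ?V (fst ps)" and p2: "sorted_listing (p2_key k N) ?V (snd ps)"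
    unfolding sorted_listings_def by simp_all
  have ab: "Inr a \<in> ?V" "Inr b \<in> ?V" "Inr a \<noteq> Inr b"
    using assms(3-5) by auto
  show ?thesis
    using that sorted_listing_subword_pair[OF p1 ab] sorted_listing_subword_pair[OF p2 ab]
      subword_construct_w[where S="{Inr a, Inr b}" and k=k and N=N and Is=Is] assms(2) \<open>1 \<le> k\<close>
    unfolding ps_def by auto
qed

theorem lemma3:
  fixes k :: nat and N :: "'a \<Rightarrow> nat set" and Is :: "'a list" and a b :: 'a
  assumes dist: "distinct Is"
    and nbC: "\<forall>x\<in>set Is. N x \<subseteq> {1..k}"
    and maximal: "\<forall>x\<in>set Is. N x \<noteq> {1..k}"
    and cond_i: "\<forall>x\<in>set Is. cyclic_nb k (N x) \<or> interval_nb k (N x)"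
    and cond_ii: "\<forall>x\<in>set Is. \<forall>y\<in>set Is. \<forall>m n l r.
        1 \<le> m \<and> m < n \<and> n \<le> k \<and> N x = {1..m} \<union> {n..k} \<and> l \<le> r \<and> N y = {l..r}
        \<longrightarrow> l > m \<or> r < n"
    and cond_iii: "\<forall>x\<in>set Is. \<forall>y\<in>set Is. \<forall>m n m' n'.
        1 \<le> m \<and> m < n \<and> n \<le> k \<and> N x = {1..m} \<union> {n..k} \<and>
        1 \<le> m' \<and> m' < n' \<and> n' \<le> k \<and> N y = {1..m'} \<union> {n'..k}
        \<longrightarrow> m' < n \<and> m < n'"
    and ab: "a \<in> set Is" "b \<in> set Is" "a \<noteq> b"
  shows "\<not> alternate (construct_w k N Is) (Inr a) (Inr b)"
proof -
  have proper: "\<forall>x\<in>set Is. proper_nb k (N x)"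
    using cond_i maximal by (auto simp: proper_nb_def)
  obtain u1 u2 where
    u1: "u1 = [Inr a, Inr b] \<or> u1 = [Inr b, Inr a]" "sorted (map (p1_key k N) u1)" and
    u2: "u2 = [Inr a, Inr b] \<or> u2 = [Inr b, Inr a]" "sorted (map (p2_key k N) u2)" and
    w: "subword {Inr a, Inr b} (construct_w k N Is) =
      u1 @ rev (subword (Inr ` {x \<in> set Is. interval_nb k (N x)}) u1) @
      u2 @ rev (subword (Inr ` {x \<in> set Is. \<not> interval_nb k (N x)}) u1)"
    using restriction_construct_w[OF dist proper ab] by blast
  have separated: "nb_m k (N y) < nb_l (N x) \<or> nb_r (N x) < nb_n k (N y)"
    if "x \<in> set Is" "y \<in> set Is" "interval_nb k (N x)" "\<not> interval_nb k (N y)" for x y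
  proof -
    have "cyclic_nb k (N y)"
      using cond_i that by blast
    then show ?thesis
      using cond_ii that interval_nb_bounds[OF that(3)] cyclic_nb_bounds[of k "N y"] maximal
      by blast
  qed
  have "adjacent_repeat (subword {Inr a, Inr b} (construct_w k N Is))"
  proof (cases "interval_nb k (N a)"; cases "interval_nb k (N b)")
    assume "interval_nb k (N a)" "interval_nb k (N b)"
    then show ?thesis
      using u1(1) ab unfolding w by (auto simp: subword_def image_iff)
  next
    assume "interval_nb k (N a)" "\<not> interval_nb k (N b)"
    then show ?thesis
      using u1 u2 separated[of a b] ab unfolding w
      by (auto simp: subword_def image_iff p1_key_def p2_key_def)
  next
    assume "\<not> interval_nb k (N a)" "interval_nb k (N b)"
    then show ?thesis
      using u1 u2 separated[of b a] ab unfolding w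
      by (auto simp: subword_def image_iff p1_key_def p2_key_def)
  next
    assume "\<not> interval_nb k (N a)" "\<not> interval_nb k (N b)"
    then show ?thesis
      using u1(1) u2(1) ab unfolding w by (auto simp: subword_def image_iff)
  qed
  then show ?thesis
    by (rule adjacent_repeat_not_alternate[rotated]) (simp add: ab(3))
qed

end
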